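(* Let $M$ be an almost complex $2m$-manifold, let $J_0$ be an almost complex structure on $M$ and let $J_t=(I+L_t)J_0(I+L_t)^{-1}$, $t\in(-\epsilon,\epsilon)$, be a small deformation of $J_0$. Then for every $a\in(0,\epsilon)$ and every $x\in M$, \[ \operatorname{rk} N_{J_t}|_x \ge \max\{\operatorname{rk} N_{J_0}|_x,\ \operatorname{rk} N_{J_a}|_x\} \] for all $t\in[-a,a]$ except a finite number.
   Context: An almost complex structure is $J\in\mathrm{End}(TM)$ with $J^2=-\mathrm{id}$. A small deformation of $J_0$ is a family $J_t=(I+L_t)J_0(I+L_t)^{-1}$ where $L_t\in\mathrm{End}(TM)$, $L_tJ_0+J_0L_t=0$, $L_t=tL+o(t)$, and $L_t$ is a power series in $t$ (with smooth coefficients) convergent for $t\in(-\epsilon,\epsilon)$. The Nijenhuis tensor is $N_J(X,Y)=[JX,JY]-J[JX,Y]-J[X,JY]-[X,Y]$, and $\operatorname{rk}N_J|_x$ denotes the complex rank at $x$ of the complexified tensor $(N_J)^{\mathbb{C}}:TM^{\mathbb{C}}\otimes TM^{\mathbb{C}}\to TM^{\mathbb{C}}$ (equivalently, the rank at $x$ of $\pi^{0,2}\circ d:A^{1,0}\to A^{0,2}$). *)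

theory Defs
  imports "HOL-Analysis.Analysis"
begin

text \<open>Local (chart) model: the manifold is an open set U of real^'n, tangent vectors are
elements of real^'n, endomorphism fields are matrix fields real^'n \<Rightarrow> real^'n^'n.\<close>

fun Ck_on :: "nat \<Rightarrow> (real^'n) set \<Rightarrow> (real^'n \<Rightarrow> real) \<Rightarrow> bool" where
  "Ck_on 0 U f = continuous_on U f"
| "Ck_on (Suc k) U f = ((\<forall>x\<in>U. f differentiable (at x)) \<and> continuous_on U f \<and>
      (\<forall>i. Ck_on k U (\<lambda>x. frechet_derivative f (at x) (axis i 1))))"

definition smooth_on :: "(real^'n) set \<Rightarrow> (real^'n \<Rightarrow> real) \<Rightarrow> bool" where
  "smooth_on U f \<longleftrightarrow> (\<forall>k. Ck_on k U f)"

definition smooth_mat_field :: "(real^'n) set \<Rightarrow> (real^'n \<Rightarrow> real^'n^'n) \<Rightarrow> bool" where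
  "smooth_mat_field U A \<longleftrightarrow> (\<forall>i j. smooth_on U (\<lambda>x. A x $ i $ j))"

definition almost_complex_structure :: "(real^'n) set \<Rightarrow> (real^'n \<Rightarrow> real^'n^'n) \<Rightarrow> bool" where
  "almost_complex_structure U J \<longleftrightarrow> open U \<and> smooth_mat_field U J \<and>
     (\<forall>x\<in>U. J x ** J x = - mat 1)"

definition lie_bracket :: "(real^'n \<Rightarrow> real^'n) \<Rightarrow> (real^'n \<Rightarrow> real^'n) \<Rightarrow> real^'n \<Rightarrow> real^'n" where
  "lie_bracket X Y x = frechet_derivative Y (at x) (X x) - frechet_derivative X (at x) (Y x)"

definition nijenhuis_field ::
  "(real^'n \<Rightarrow> real^'n^'n) \<Rightarrow> (real^'n \<Rightarrow> real^'n) \<Rightarrow> (real^'n \<Rightarrow> real^'n) \<Rightarrow> real^'n \<Rightarrow> real^'n" where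
  "nijenhuis_field J X Y x =
     lie_bracket (\<lambda>y. J y *v X y) (\<lambda>y. J y *v Y y) x
     - J x *v lie_bracket (\<lambda>y. J y *v X y) Y x
     - J x *v lie_bracket X (\<lambda>y. J y *v Y y) x
     - lie_bracket X Y x"

definition nijenhuis :: "(real^'n \<Rightarrow> real^'n^'n) \<Rightarrow> real^'n \<Rightarrow> real^'n \<Rightarrow> real^'n \<Rightarrow> real^'n" where
  "nijenhuis J x u v = nijenhuis_field J (\<lambda>_. u) (\<lambda>_. v) x"

definition nijenhuis_C :: "(real^'n \<Rightarrow> real^'n^'n) \<Rightarrow> real^'n \<Rightarrow> complex^'n \<Rightarrow> complex^'n \<Rightarrow> complex^'n" where
  "nijenhuis_C J x u v = (\<Sum>i\<in>UNIV. \<Sum>j\<in>UNIV.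
      (u $ i * v $ j) *s (\<chi> k. complex_of_real (nijenhuis J x (axis i 1) (axis j 1) $ k)))"

text \<open>Complex rank at x of (N_J)^C : TM^C \<otimes> TM^C \<rightarrow> TM^C: complex dimension of its image,
i.e. of the complex span of all values N^C(u,v).\<close>
definition nijenhuis_rank :: "(real^'n \<Rightarrow> real^'n^'n) \<Rightarrow> real^'n \<Rightarrow> nat" where
  "nijenhuis_rank J x = vec.dim (range (\<lambda>(u, v). nijenhuis_C J x u v))"

definition deformed :: "(real^'n \<Rightarrow> real^'n^'n) \<Rightarrow> (real^'n \<Rightarrow> real^'n^'n) \<Rightarrow> real^'n \<Rightarrow> real^'n^'n" where
  "deformed J0 Lt x = (mat 1 + Lt x) ** J0 x ** matrix_inv (mat 1 + Lt x)"

end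

(*
  The Nijenhuis tensor of J_t at x is a polynomial expression in the entries of
  L_t(x), of the first derivatives of L_t at x and of (1 + L_t(x))^-1. The first two are convergent
  power series in t, so they extend holomorphically to the disc of radius eps; the inverse extends
  holomorphically to the component S of the set where det (1 + L_t(x)) does not vanish that contains
  the real interval. Hence the values N_{J_t}(e_i, e_j) at x form a holomorphic family on the
  connected open set S.
  Choose t0 in [-a, a] where the rank is maximal, complete a basis of the span of these values at
  t0 by constant vectors, and take the determinant of the resulting square matrix as a function
  of t. It is holomorphic on S and nonzero at t0, so by the identity theorem it has only finitely
  many zeros on the compact interval [-a, a]; off these zeros the rank is at least the maximum,
  in particular at least the ranks at t = 0 (where J_t = J_0) and at t = a.
*)
theory Submission
  imports Defs "HOL-Complex_Analysis.Complex_Analysis"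
begin

no_notation fps_nth (infixl \<open>$\<close> 75)

section \<open>Matrix algebra\<close>

lemma matrix_inv_inverse:
  assumes "invertible A"
  shows matrix_inv_right: "A ** matrix_inv A = mat 1"
    and matrix_inv_left: "matrix_inv A ** A = mat 1"
  using someI_ex[OF assms[unfolded invertible_def]] unfolding matrix_inv_def by auto

lemma matrix_inv_mat_1: "matrix_inv (mat 1 :: 'a::semiring_1^'n^'n) = mat 1"
proof -
  have "invertible (mat 1 :: 'a^'n^'n)"
    unfolding invertible_def by (rule exI[of _ "mat 1"]) simp
  from matrix_inv_right[OF this] show ?thesis by simp
qed

lemma matrix_inv_cramer:
  fixes A :: "'a::field^'n^'n"
  assumes "invertible A"
  shows "matrix_inv A $ k $ j = det (\<chi> i l. if l = k then axis j 1 $ i else A $ i $ l) / det A"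
proof -
  have "A *v (matrix_inv A *v axis j 1) = axis j 1"
    using matrix_inv_right[OF assms] by (simp add: matrix_vector_mul_assoc)
  then have "matrix_inv A *v axis j 1 = (\<chi> k. det (\<chi> i l. if l = k then axis j 1 $ i else A $ i $ l) / det A)"
    using cramer[of A] invertible_det_nz[of A] assms by blast
  moreover have "(matrix_inv A *v axis j 1) $ k = matrix_inv A $ k $ j"
    by (simp add: matrix_vector_mult_def axis_def if_distrib cong: if_cong)
  ultimately show ?thesis by simp
qed

lemma matrix_mul_minus_right: "(A::'a::ring_1^'n^'m) ** (- B) = - (A ** B)"
  by (simp add: vec_eq_iff matrix_matrix_mult_def sum_negf)

lemma of_real_det: "complex_of_real (det A) = det (\<chi> i j. complex_of_real (A $ i $ j))"
  unfolding det_def by (simp add: of_real_sum of_real_prod)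

lemma det_nonzero_if_rows_span:
  fixes A :: "'a::field^'n^'n"
  assumes "vec.span (rows A) = UNIV"
  shows "det A \<noteq> 0"
proof -
  obtain B :: "'a^'n^'n" where "B ** A = mat 1"
    using assms matrix_left_invertible_span_rows_gen by blast
  then have "invertible A"
    unfolding invertible_def using matrix_left_right_inverse by blast
  then show ?thesis
    by (simp add: invertible_det_nz)
qed

lemma nonsingular_completion_of_span:
  fixes w :: "'p \<Rightarrow> 'a::field^'n"
  obtains K q c where "card K = vec.dim (range w)"
    and "det (\<chi> k. if k \<in> K then w (q k) else c k) \<noteq> 0"
proof -
  obtain B0 where B0: "B0 \<subseteq> range w" "vec.independent B0" "card B0 = vec.dim (range w)"
    using vec.basis_exists[of "range w"] by metis
  obtain B where B: "B0 \<subseteq> B" "vec.independent B" "vec.span B = UNIV"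
    using vec.maximal_independent_subset_extend[OF subset_UNIV B0(2)] by (metis top.extremum_unique)
  have "card B = CARD('n)"
    using vec.basis_card_eq_dim[of B UNIV] B vec_dim_card by simp
  then obtain \<beta> where \<beta>: "bij_betw \<beta> (UNIV :: 'n set) B"
    using finite_same_card_bij[of "UNIV :: 'n set" B] B(2) vec.finiteI_independent by auto
  define K where "K = \<beta> -` B0"
  define q where "q k = (SOME p. w p = \<beta> k)" for k
  have q: "w (q k) = \<beta> k" if "k \<in> K" for k
  proof -
    have "\<exists>p. w p = \<beta> k"
      using that B0(1) unfolding K_def by (metis imageE subsetD vimageE)
    then show ?thesis
      unfolding q_def by (rule someI_ex)
  qed
  have "card K = card B0"
    unfolding K_def using \<beta> B(1) by (intro card_vimage_inj) (auto simp: bij_betw_def)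
  moreover have "(\<chi> k. if k \<in> K then w (q k) else \<beta> k) = (\<chi> k. \<beta> k)"
    using q by (simp add: vec_eq_iff)
  moreover have "rows (\<chi> k. \<beta> k) = B"
    using \<beta> unfolding rows_def row_def bij_betw_def by (simp add: vec_lambda_eta full_SetCompr_eq)
  ultimately show ?thesis
    using that[of K q \<beta>] B0(3) B(3) det_nonzero_if_rows_span[of "\<chi> k. \<beta> k"] by simp
qed

lemma card_le_dim_if_det_nonzero:
  fixes w :: "'p \<Rightarrow> 'a::field^'n"
  assumes "det (\<chi> k. if k \<in> K then w (q k) else c k) \<noteq> 0" (is "det ?M \<noteq> 0")
  shows "card K \<le> vec.dim (range w)"
proof -
  define f where "f k = (if k \<in> K then w (q k) else c k)" for k
  have row: "row k ?M = f k" for k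
    by (simp add: row_def f_def vec_eq_iff)
  have "inj f"
  proof (rule injI, rule ccontr)
    fix i j assume "f i = f j" "i \<noteq> j"
    then show False
      using det_identical_rows[of i j ?M] assms by (simp add: row)
  qed
  moreover have "vec.independent (rows ?M)"
    using det_dependent_rows[of ?M] assms by blast
  then have "vec.independent (f ` K)"
    by (rule vec.independent_mono) (auto simp: rows_def row)
  moreover have "f ` K \<subseteq> range w"
    by (auto simp: f_def)
  ultimately have "card (f ` K) \<le> vec.dim (range w)"
    using vec.independent_card_le_dim by blast
  then show ?thesis
    using card_image[OF inj_on_subset[OF \<open>inj f\<close> subset_UNIV]] by simp
qed

lemma linear_axis_expansion:
  fixes f :: "real^'n \<Rightarrow> 'b::real_vector"
  assumes "linear f"
  shows "f h = (\<Sum>l\<in>UNIV. h $ l *\<^sub>R f (axis l 1))"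
proof -
  have "f h = f (\<Sum>l\<in>UNIV. h $ l *\<^sub>R axis l 1)"
    using basis_expansion[of h] by (simp add: scalar_mult_eq_scaleR)
  also have "\<dots> = (\<Sum>l\<in>UNIV. h $ l *\<^sub>R f (axis l 1))"
    using assms by (simp add: linear_sum linear_scale o_def)
  finally show ?thesis .
qed

section \<open>Holomorphic extensions of real-parameter families\<close>

text \<open>Stands in for real analyticity in the parameter t: only the real points of the open set S
  are constrained.\<close>

definition holo_ext :: "complex set \<Rightarrow> (real \<Rightarrow> complex) \<Rightarrow> bool" where
  "holo_ext S f \<longleftrightarrow>
     (\<exists>h. h holomorphic_on S \<and> (\<forall>t. complex_of_real t \<in> S \<longrightarrow> h (of_real t) = f t))"

lemma holo_ext_const: "holo_ext S (\<lambda>t. c)"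
  unfolding holo_ext_def by (rule exI[of _ "\<lambda>_. c"]) auto

lemma holo_ext_add: "holo_ext S f \<Longrightarrow> holo_ext S g \<Longrightarrow> holo_ext S (\<lambda>t. f t + g t)"
  unfolding holo_ext_def by (metis (no_types, lifting) holomorphic_on_add)

lemma holo_ext_diff: "holo_ext S f \<Longrightarrow> holo_ext S g \<Longrightarrow> holo_ext S (\<lambda>t. f t - g t)"
  unfolding holo_ext_def by (metis (no_types, lifting) holomorphic_on_diff)

lemma holo_ext_mult: "holo_ext S f \<Longrightarrow> holo_ext S g \<Longrightarrow> holo_ext S (\<lambda>t. f t * g t)"
  unfolding holo_ext_def by (metis (no_types, lifting) holomorphic_on_mult)

lemma holo_ext_sum:
  "finite I \<Longrightarrow> (\<And>i. i \<in> I \<Longrightarrow> holo_ext S (f i)) \<Longrightarrow> holo_ext S (\<lambda>t. \<Sum>i\<in>I. f i t)"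
  by (induction I rule: finite_induct) (auto intro: holo_ext_add holo_ext_const)

lemma holo_ext_prod:
  "finite I \<Longrightarrow> (\<And>i. i \<in> I \<Longrightarrow> holo_ext S (f i)) \<Longrightarrow> holo_ext S (\<lambda>t. \<Prod>i\<in>I. f i t)"
  by (induction I rule: finite_induct) (auto intro: holo_ext_mult holo_ext_const)

lemma holo_ext_subset: "holo_ext S f \<Longrightarrow> T \<subseteq> S \<Longrightarrow> holo_ext T f"
  unfolding holo_ext_def by (meson holomorphic_on_subset subsetD)

lemma holo_ext_cong:
  "holo_ext S f \<Longrightarrow> (\<And>t. complex_of_real t \<in> S \<Longrightarrow> f t = g t) \<Longrightarrow> holo_ext S g"
  unfolding holo_ext_def by metis

lemma holo_ext_divide:
  assumes "holo_ext S f" "D holomorphic_on S" "\<And>z. z \<in> S \<Longrightarrow> D z \<noteq> 0"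
    and "\<And>t. complex_of_real t \<in> S \<Longrightarrow> D (of_real t) = d t"
  shows "holo_ext S (\<lambda>t. f t / d t)"
proof -
  obtain h where "h holomorphic_on S" "\<And>t. complex_of_real t \<in> S \<Longrightarrow> h (of_real t) = f t"
    using assms(1) unfolding holo_ext_def by blast
  then show ?thesis
    unfolding holo_ext_def using assms(2-4)
    by (intro exI[of _ "\<lambda>z. h z / D z"]) (auto intro: holomorphic_on_divide)
qed

lemma holo_ext_det:
  fixes M :: "real \<Rightarrow> complex^'n^'n"
  assumes "\<And>i j. holo_ext S (\<lambda>t. M t $ i $ j)"
  shows "holo_ext S (\<lambda>t. det (M t))"
  unfolding det_def by (intro holo_ext_sum holo_ext_mult holo_ext_prod holo_ext_const assms) auto

lemma holo_ext_power_series: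
  fixes c :: "nat \<Rightarrow> real"
  assumes S: "S \<subseteq> ball 0 e" and sums: "\<And>t. \<bar>t\<bar> < e \<Longrightarrow> (\<lambda>k. t ^ k * c k) sums f t"
  shows "holo_ext S (\<lambda>t. complex_of_real (f t))"
proof -
  have radius: "conv_radius (\<lambda>k. complex_of_real (c k)) \<ge> e"
  proof (rule conv_radius_geI_ex')
    fix r :: real assume "0 < r" "ereal r < ereal e"
    then have "summable (\<lambda>k. complex_of_real (r ^ k * c k))"
      using sums[of r] by (intro summable_of_real) (auto simp: sums_iff)
    then show "summable (\<lambda>k. complex_of_real (c k) * complex_of_real r ^ k)"
      by (simp add: mult.commute)
  qed
  have "(\<lambda>k. complex_of_real (c k) * z ^ k) sums (\<Sum>k. complex_of_real (c k) * z ^ k)"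
    if "z \<in> ball 0 e" for z
  proof (intro summable_sums summable_in_conv_radius)
    have "ereal (norm z) < ereal e" using that by simp
    also note radius
    finally show "ereal (norm z) < conv_radius (\<lambda>k. complex_of_real (c k))" .
  qed
  then have "(\<lambda>z. \<Sum>k. complex_of_real (c k) * z ^ k) holomorphic_on ball 0 e"
    by (intro power_series_holomorphic) simp
  moreover have "(\<Sum>k. complex_of_real (c k) * of_real t ^ k) = of_real (f t)"
    if "complex_of_real t \<in> S" for t
  proof -
    have "\<bar>t\<bar> < e" using that S by auto
    then have "(\<lambda>k. complex_of_real (t ^ k * c k)) sums of_real (f t)"
      by (intro sums_of_real sums)
    then show ?thesis by (simp add: sums_iff mult.commute)
  qed
  ultimately show ?thesis
    unfolding holo_ext_def using S by (meson holomorphic_on_subset)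
qed

definition holo_ext_vec :: "complex set \<Rightarrow> (real \<Rightarrow> real^'n) \<Rightarrow> bool" where
  "holo_ext_vec S v \<longleftrightarrow> (\<forall>i. holo_ext S (\<lambda>t. complex_of_real (v t $ i)))"

definition holo_ext_mat :: "complex set \<Rightarrow> (real \<Rightarrow> real^'n^'m) \<Rightarrow> bool" where
  "holo_ext_mat S M \<longleftrightarrow> (\<forall>i j. holo_ext S (\<lambda>t. complex_of_real (M t $ i $ j)))"

lemma holo_ext_vec_const: "holo_ext_vec S (\<lambda>t. c)"
  unfolding holo_ext_vec_def by (simp add: holo_ext_const)

lemma holo_ext_vec_diff: "holo_ext_vec S v \<Longrightarrow> holo_ext_vec S w \<Longrightarrow> holo_ext_vec S (\<lambda>t. v t - w t)"
  unfolding holo_ext_vec_def by (simp add: holo_ext_diff)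

lemma holo_ext_vec_add: "holo_ext_vec S v \<Longrightarrow> holo_ext_vec S w \<Longrightarrow> holo_ext_vec S (\<lambda>t. v t + w t)"
  unfolding holo_ext_vec_def by (simp add: holo_ext_add)

lemma holo_ext_vec_mult:
  fixes M :: "real \<Rightarrow> real^'n^'m"
  shows "holo_ext_mat S M \<Longrightarrow> holo_ext_vec S v \<Longrightarrow> holo_ext_vec S (\<lambda>t. M t *v v t)"
  unfolding holo_ext_mat_def holo_ext_vec_def matrix_vector_mult_def
  by (simp add: holo_ext_sum holo_ext_mult)

lemma holo_ext_vec_cong:
  "holo_ext_vec S v \<Longrightarrow> (\<And>t. complex_of_real t \<in> S \<Longrightarrow> v t = w t) \<Longrightarrow> holo_ext_vec S w"
  unfolding holo_ext_vec_def by (metis (mono_tags, lifting) holo_ext_cong)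

lemma holo_ext_mat_const: "holo_ext_mat S (\<lambda>t. c)"
  unfolding holo_ext_mat_def by (simp add: holo_ext_const)

lemma holo_ext_mat_add: "holo_ext_mat S M \<Longrightarrow> holo_ext_mat S N \<Longrightarrow> holo_ext_mat S (\<lambda>t. M t + N t)"
  unfolding holo_ext_mat_def by (simp add: holo_ext_add)

lemma holo_ext_mat_uminus: "holo_ext_mat S M \<Longrightarrow> holo_ext_mat S (\<lambda>t. - M t)"
  unfolding holo_ext_mat_def using holo_ext_diff[OF holo_ext_const[of S 0]] by simp

lemma holo_ext_mat_mult:
  fixes M :: "real \<Rightarrow> real^'n^'m" and N :: "real \<Rightarrow> real^'p^'n"
  shows "holo_ext_mat S M \<Longrightarrow> holo_ext_mat S N \<Longrightarrow> holo_ext_mat S (\<lambda>t. M t ** N t)"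
  unfolding holo_ext_mat_def matrix_matrix_mult_def by (simp add: holo_ext_sum holo_ext_mult)

lemma holo_ext_mat_scaleR:
  "holo_ext S (\<lambda>t. complex_of_real (c t)) \<Longrightarrow> holo_ext_mat S M \<Longrightarrow> holo_ext_mat S (\<lambda>t. c t *\<^sub>R M t)"
  unfolding holo_ext_mat_def by (simp add: holo_ext_mult)

lemma holo_ext_mat_sum:
  "finite I \<Longrightarrow> (\<And>l. l \<in> I \<Longrightarrow> holo_ext_mat S (M l)) \<Longrightarrow> holo_ext_mat S (\<lambda>t. \<Sum>l\<in>I. M l t)"
  unfolding holo_ext_mat_def by (simp add: holo_ext_sum)

lemma holo_ext_mat_cong:
  "holo_ext_mat S M \<Longrightarrow> (\<And>t. complex_of_real t \<in> S \<Longrightarrow> M t = N t) \<Longrightarrow> holo_ext_mat S N"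
  unfolding holo_ext_mat_def by (metis (mono_tags, lifting) holo_ext_cong)

lemma holo_ext_mat_power_series:
  fixes c :: "nat \<Rightarrow> real^'n^'m"
  assumes "S \<subseteq> ball 0 e" and "\<And>t. \<bar>t\<bar> < e \<Longrightarrow> (\<lambda>k. t ^ k *\<^sub>R c k) sums M t"
  shows "holo_ext_mat S M"
  unfolding holo_ext_mat_def
proof (intro allI)
  fix i j
  have "(\<lambda>k. t ^ k * c k $ i $ j) sums M t $ i $ j" if "\<bar>t\<bar> < e" for t
    using bounded_linear.sums[OF bounded_linear_vec_nth
            bounded_linear.sums[OF bounded_linear_vec_nth assms(2)[OF that]]] by simp
  then show "holo_ext S (\<lambda>t. complex_of_real (M t $ i $ j))"
    by (rule holo_ext_power_series[OF assms(1)])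
qed

lemma power_series_sums_at_zero:
  fixes c :: "nat \<Rightarrow> 'a::real_normed_vector"
  assumes "(\<lambda>k. (0::real) ^ k *\<^sub>R c k) sums s"
  shows "s = c 0"
proof -
  have "(\<lambda>k. (0::real) ^ k *\<^sub>R c k) = (\<lambda>k. if k = 0 then c k else 0)"
    by (simp add: fun_eq_iff power_0_left)
  with assms have "(\<lambda>k. if k = 0 then c k else 0) sums s"
    by (simp only:)
  from sums_unique2[OF this sums_single] show ?thesis .
qed

text \<open>Taking S to be a connected component of the set where det A does not vanish keeps S
  connected, which the identity theorem requires, while making division by det A holomorphic.\<close>

lemma holo_ext_mat_matrix_inv:
  fixes A :: "real \<Rightarrow> real^'n^'n"
  assumes A: "holo_ext_mat B A" and B: "open B"
    and I: "connected I" "s \<in> I" "complex_of_real ` I \<subseteq> B"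
    and inv: "\<And>t. t \<in> I \<Longrightarrow> invertible (A t)"
  obtains S where "open S" "connected S" "S \<subseteq> B" "complex_of_real ` I \<subseteq> S"
    "holo_ext_mat S (\<lambda>t. matrix_inv (A t))"
proof -
  have "holo_ext B (\<lambda>t. det (\<chi> i j. complex_of_real (A t $ i $ j)))"
    using A unfolding holo_ext_mat_def by (intro holo_ext_det) simp
  then obtain D where D: "D holomorphic_on B"
    and D_det: "\<And>t. complex_of_real t \<in> B \<Longrightarrow> D (of_real t) = of_real (det (A t))"
    unfolding holo_ext_def of_real_det by metis
  define S where "S = connected_component_set (B \<inter> D -` (- {0})) (of_real s)"
  have "open (B \<inter> D -` (- {0}))"
    by (rule continuous_open_preimage[OF holomorphic_on_imp_continuous_on[OF D] B]) auto
  then have "open S"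
    unfolding S_def by (rule open_connected_component)
  moreover have "connected S"
    unfolding S_def by simp
  moreover have "S \<subseteq> B" and D_nz: "\<And>z. z \<in> S \<Longrightarrow> D z \<noteq> 0"
    unfolding S_def using connected_component_subset by blast+
  moreover have "complex_of_real ` I \<subseteq> S"
    unfolding S_def
  proof (rule connected_component_maximal)
    show "connected (complex_of_real ` I)"
      by (intro connected_continuous_image continuous_intros I)
    show "complex_of_real ` I \<subseteq> B \<inter> D -` (- {0})"
      using I(3) D_det inv invertible_det_nz by fastforce
    show "complex_of_real s \<in> complex_of_real ` I"
      using I(2) by (rule imageI)
  qed
  moreover have "holo_ext_mat S (\<lambda>t. matrix_inv (A t))"
    unfolding holo_ext_mat_def
  proof (intro allI)
    fix k j
    define N where "N t = (\<chi> i l. if l = k then axis j 1 $ i else A t $ i $ l)" for t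
    have "holo_ext S (\<lambda>t. det (\<chi> i l. complex_of_real (N t $ i $ l)))"
    proof (rule holo_ext_det)
      fix i l
      show "holo_ext S (\<lambda>t. (\<chi> i l. complex_of_real (N t $ i $ l)) $ i $ l)"
        using holo_ext_subset[OF A[unfolded holo_ext_mat_def, rule_format] \<open>S \<subseteq> B\<close>]
        by (cases "l = k") (simp_all add: N_def holo_ext_const)
    qed
    then have "holo_ext S (\<lambda>t. complex_of_real (det (N t)) / complex_of_real (det (A t)))"
      unfolding of_real_det[symmetric]
      by (rule holo_ext_divide[OF _ holomorphic_on_subset[OF D \<open>S \<subseteq> B\<close>] D_nz])
        (use \<open>S \<subseteq> B\<close> D_det in auto)
    then show "holo_ext S (\<lambda>t. complex_of_real (matrix_inv (A t) $ k $ j))"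
    proof (rule holo_ext_cong)
      fix t assume "complex_of_real t \<in> S"
      then have "invertible (A t)"
        using D_nz D_det \<open>S \<subseteq> B\<close> invertible_det_nz by force
      then show "complex_of_real (det (N t)) / complex_of_real (det (A t))
                   = complex_of_real (matrix_inv (A t) $ k $ j)"
        by (simp add: matrix_inv_cramer N_def)
    qed
  qed
  ultimately show ?thesis using that by blast
qed

section \<open>Generic rank of a holomorphic family of vectors\<close>

lemma holomorphic_finite_zeros_real_interval:
  assumes h: "h holomorphic_on S" and S: "open S" "connected S"
    and sub: "complex_of_real ` {a..b} \<subseteq> S"
    and t0: "h (of_real t0) \<noteq> 0" "t0 \<in> {a..b}"
  shows "finite {t \<in> {a..b}. h (of_real t) = 0}"
proof -
  have "finite {z \<in> complex_of_real ` {a..b}. h z = 0}"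
  proof (cases "h constant_on S")
    case True
    then have "h z \<noteq> 0" if "z \<in> S" for z
      using that t0 sub unfolding constant_on_def by force
    then have "{z \<in> complex_of_real ` {a..b}. h z = 0} = {}"
      using sub by blast
    then show ?thesis by (metis finite.emptyI)
  next
    case False
    have "compact (complex_of_real ` {a..b})"
      by (intro compact_continuous_image continuous_intros) auto
    then show ?thesis
      using holomorphic_compact_finite_zeros[OF h S _ sub False] by blast
  qed
  then have "finite (complex_of_real -` {z \<in> complex_of_real ` {a..b}. h z = 0})"
    by (rule finite_vimageI) (simp add: inj_on_def)
  then show ?thesis
    by (rule finite_subset[rotated]) auto
qed

lemma holo_ext_rank_maximal_cofinite:
  fixes w :: "real \<Rightarrow> 'p \<Rightarrow> complex^'n"
  assumes w: "\<And>p k. holo_ext S (\<lambda>t. w t p $ k)"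
    and S: "open S" "connected S" "complex_of_real ` {a..b} \<subseteq> S"
  shows "finite {t \<in> {a..b}. \<exists>s\<in>{a..b}. vec.dim (range (w t)) < vec.dim (range (w s))}"
proof (cases "a \<le> b")
  case True
  define r where "r t = vec.dim (range (w t))" for t
  have "finite (r ` {a..b})"
    by (rule finite_subset[of _ "{..CARD('n)}"]) (auto simp: r_def dim_subset_UNIV_cart_gen)
  moreover have "r ` {a..b} \<noteq> {}"
    using True by simp
  ultimately have "Max (r ` {a..b}) \<in> r ` {a..b}"
    by (rule Max_in)
  then obtain t0 where t0: "t0 \<in> {a..b}" "r t0 = Max (r ` {a..b})"
    by (metis imageE)
  have max: "r s \<le> r t0" if "s \<in> {a..b}" for s
    using t0(2) Max_ge[OF \<open>finite (r ` {a..b})\<close>] that by simp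
  obtain K q c where K: "card K = r t0"
    and det_t0: "det (\<chi> k. if k \<in> K then w t0 (q k) else c k) \<noteq> 0"
    using nonsingular_completion_of_span[of "w t0"] unfolding r_def by metis
  have "holo_ext S (\<lambda>t. det (\<chi> k. if k \<in> K then w t (q k) else c k))"
  proof (rule holo_ext_det)
    fix i j
    show "holo_ext S (\<lambda>t. (\<chi> k. if k \<in> K then w t (q k) else c k) $ i $ j)"
      by (cases "i \<in> K") (simp_all add: w holo_ext_const)
  qed
  then obtain h where h: "h holomorphic_on S"
    and h_det: "\<And>t. complex_of_real t \<in> S \<Longrightarrow> h (of_real t) = det (\<chi> k. if k \<in> K then w t (q k) else c k)"
    unfolding holo_ext_def by blast
  have zeros_finite: "finite {t \<in> {a..b}. h (of_real t) = 0}"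
  proof (rule holomorphic_finite_zeros_real_interval[OF h S _ t0(1)])
    have "complex_of_real t0 \<in> S"
      using t0(1) S(3) by blast
    then show "h (of_real t0) \<noteq> 0"
      using h_det det_t0 by simp
  qed
  have rank_drop_zero: "h (of_real t) = 0" if "t \<in> {a..b}" "s \<in> {a..b}" "r t < r s" for s t
  proof (rule ccontr)
    assume "h (of_real t) \<noteq> 0"
    moreover have "complex_of_real t \<in> S"
      using that(1) S(3) by blast
    ultimately have "det (\<chi> k. if k \<in> K then w t (q k) else c k) \<noteq> 0"
      using h_det by simp
    then have "card K \<le> r t"
      unfolding r_def by (rule card_le_dim_if_det_nonzero)
    then show False using K max[OF that(2)] that(3) by simp
  qed
  show ?thesis
    unfolding r_def[symmetric] using rank_drop_zero by (intro finite_subset[OF _ zeros_finite]) blast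
qed simp

section \<open>Derivatives of matrix fields\<close>

lemma matrix_differentiable_iff_entries:
  fixes f :: "'a::real_normed_vector \<Rightarrow> real^'n^'m"
  shows "f differentiable (at x within S) \<longleftrightarrow> (\<forall>i j. (\<lambda>y. f y $ i $ j) differentiable (at x within S))"
proof
  assume "f differentiable (at x within S)"
  then show "\<forall>i j. (\<lambda>y. f y $ i $ j) differentiable (at x within S)"
    unfolding differentiable_def
    by (metis bounded_linear.has_derivative[OF bounded_linear_vec_nth])
next
  assume entries: "\<forall>i j. (\<lambda>y. f y $ i $ j) differentiable (at x within S)"
  have "(\<lambda>y. f y \<bullet> axis i (axis j 1)) differentiable (at x within S)" for i j
    using entries by (simp add: inner_axis)
  then show "f differentiable (at x within S)"
    unfolding differentiable_componentwise_within[of f] Basis_vec_def by auto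
qed

lemma smooth_mat_field_differentiable:
  assumes "smooth_mat_field U M" "x \<in> U"
  shows "M differentiable (at x)"
proof -
  have "Ck_on (Suc 0) U (\<lambda>y. M y $ i $ j)" for i j
    using assms(1) unfolding smooth_mat_field_def smooth_on_def by blast
  then show ?thesis
    using assms(2) by (simp add: matrix_differentiable_iff_entries)
qed

lemma differentiable_det:
  fixes M :: "'a::real_normed_vector \<Rightarrow> real^'n^'n"
  assumes "\<And>i j. (\<lambda>y. M y $ i $ j) differentiable (at x)"
  shows "(\<lambda>y. det (M y)) differentiable (at x)"
proof -
  have prod: "(\<lambda>y. \<Prod>i\<in>I. M y $ i $ p i) differentiable (at x)" if "finite I" for I and p :: "'n \<Rightarrow> 'n"
    using that by (induction I rule: finite_induct) (simp_all add: assms)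
  show ?thesis
    unfolding det_def by (simp add: prod)
qed

lemma bounded_bilinear_matrix_matrix_mult:
  "bounded_bilinear (\<lambda>(A::real^'n^'m) (B::real^'p^'n). A ** B)"
proof -
  have "bilinear (\<lambda>(A::real^'n^'m) (B::real^'p^'n). A ** B)"
    unfolding bilinear_def
    by (auto intro!: linearI simp: vec_eq_iff matrix_matrix_mult_def sum.distrib algebra_simps
        sum_distrib_left)
  then show ?thesis
    using bilinear_conv_bounded_bilinear by blast
qed

lemmas has_derivative_matrix_mult = bounded_bilinear.FDERIV[OF bounded_bilinear_matrix_matrix_mult]

lemma differentiable_matrix_inv:
  fixes A :: "'a::real_normed_vector \<Rightarrow> real^'n^'n"
  assumes A: "A differentiable (at x)" and U: "open U" "x \<in> U"
    and inv: "\<And>y. y \<in> U \<Longrightarrow> invertible (A y)"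
  shows "(\<lambda>y. matrix_inv (A y)) differentiable (at x)"
  unfolding matrix_differentiable_iff_entries
proof (intro allI)
  fix k j
  have entries: "(\<lambda>y. A y $ i $ l) differentiable (at x)" for i l
    using A matrix_differentiable_iff_entries by blast
  have "(\<lambda>y. det (\<chi> i l. if l = k then axis j 1 $ i else A y $ i $ l) / det (A y))
          differentiable (at x)"
  proof (intro differentiable_divide differentiable_det)
    show "det (A x) \<noteq> 0"
      using inv[OF U(2)] invertible_det_nz by blast
    fix i l
    show "(\<lambda>y. (\<chi> i l. if l = k then axis j 1 $ i else A y $ i $ l) $ i $ l) differentiable (at x)"
      using entries by (cases "l = k") simp_all
  qed (rule entries)
  then obtain D where
    "((\<lambda>y. det (\<chi> i l. if l = k then axis j 1 $ i else A y $ i $ l) / det (A y)) has_derivative D) (at x)"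
    unfolding differentiable_def by blast
  then have "((\<lambda>y. matrix_inv (A y) $ k $ j) has_derivative D) (at x)"
    by (rule has_derivative_transform_within_open[OF _ U]) (simp add: matrix_inv_cramer inv)
  then show "(\<lambda>y. matrix_inv (A y) $ k $ j) differentiable (at x)"
    unfolding differentiable_def by blast
qed

lemma has_derivative_matrix_inv:
  fixes A :: "'a::real_normed_vector \<Rightarrow> real^'n^'n"
  assumes A: "(A has_derivative A') (at x)" and U: "open U" "x \<in> U"
    and inv: "\<And>y. y \<in> U \<Longrightarrow> invertible (A y)"
  shows "((\<lambda>y. matrix_inv (A y)) has_derivative
           (\<lambda>h. - (matrix_inv (A x) ** A' h ** matrix_inv (A x)))) (at x)"
proof -
  obtain I' where I': "((\<lambda>y. matrix_inv (A y)) has_derivative I') (at x)"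
    using differentiable_matrix_inv[OF differentiableI[OF A] U inv] unfolding differentiable_def by blast
  have "((\<lambda>y. A y ** matrix_inv (A y)) has_derivative (\<lambda>h. A x ** I' h + A' h ** matrix_inv (A x))) (at x)"
    using has_derivative_matrix_mult[OF A I'] by simp
  moreover have "((\<lambda>y. A y ** matrix_inv (A y)) has_derivative (\<lambda>h. 0)) (at x)"
    by (rule has_derivative_transform_within_open[OF has_derivative_const U]) (simp add: matrix_inv_right inv)
  ultimately have zero: "(\<lambda>h. A x ** I' h + A' h ** matrix_inv (A x)) = (\<lambda>h. 0)"
    by (rule has_derivative_unique)
  have eq: "A x ** I' h = - (A' h ** matrix_inv (A x))" for h
    using fun_cong[OF zero, of h] by (simp add: add_eq_0_iff)
  have "I' h = - (matrix_inv (A x) ** A' h ** matrix_inv (A x))" for h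
  proof -
    have "I' h = (matrix_inv (A x) ** A x) ** I' h"
      by (simp add: matrix_inv_left inv U)
    also have "\<dots> = matrix_inv (A x) ** (A x ** I' h)"
      by (rule matrix_mul_assoc[symmetric])
    also have "\<dots> = - (matrix_inv (A x) ** A' h ** matrix_inv (A x))"
      unfolding eq matrix_mul_minus_right matrix_mul_assoc ..
    finally show ?thesis .
  qed
  then have "I' = (\<lambda>h. - (matrix_inv (A x) ** A' h ** matrix_inv (A x)))"
    by (rule ext)
  then show ?thesis
    using I' by simp
qed

lemma has_derivative_deformed:
  fixes J L :: "real^'n \<Rightarrow> real^'n^'n"
  assumes L: "(L has_derivative L') (at x)" and J: "(J has_derivative J') (at x)"
    and U: "open U" "x \<in> U" and inv: "\<And>y. y \<in> U \<Longrightarrow> invertible (mat 1 + L y)"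
  shows "(deformed J L has_derivative
     (\<lambda>h. (mat 1 + L x) ** J x ** - (matrix_inv (mat 1 + L x) ** L' h ** matrix_inv (mat 1 + L x))
        + ((mat 1 + L x) ** J' h + L' h ** J x) ** matrix_inv (mat 1 + L x))) (at x)"
proof -
  have A: "((\<lambda>y. mat 1 + L y) has_derivative L') (at x)"
    using has_derivative_add[OF has_derivative_const L] by simp
  show ?thesis
    unfolding deformed_def[abs_def]
    by (intro has_derivative_matrix_mult has_derivative_matrix_inv[OF A U inv] A J)
qed

lemma bounded_linear_matrix_vector_mult_left: "bounded_linear (\<lambda>M::real^'n^'m. M *v u)"
proof -
  have "linear (\<lambda>M::real^'n^'m. M *v u)"
    by (auto intro!: linearI simp: vec_eq_iff matrix_vector_mult_def sum.distrib algebra_simps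
        sum_distrib_left)
  then show ?thesis
    using linear_conv_bounded_linear by blast
qed

section \<open>The Nijenhuis tensor of a deformation\<close>

text \<open>On constant vector fields the Nijenhuis tensor at x depends only on the 1-jet of J at x,
  i.e. on J x and its derivative DJ there.\<close>

definition nijenhuis_jet ::
    "real^'n^'n \<Rightarrow> (real^'n \<Rightarrow> real^'n^'n) \<Rightarrow> real^'n \<Rightarrow> real^'n \<Rightarrow> real^'n" where
  "nijenhuis_jet J DJ u v =
     DJ (J *v u) *v v - DJ (J *v v) *v u + J *v (DJ v *v u) - J *v (DJ u *v v)"

lemma nijenhuis_eq_jet:
  assumes "(J has_derivative DJ) (at x)"
  shows "nijenhuis J x u v = nijenhuis_jet (J x) DJ u v"
proof -
  have "frechet_derivative (\<lambda>y. J y *v w) (at x) = (\<lambda>h. DJ h *v w)" for w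
    by (rule frechet_derivative_at[symmetric],
        rule bounded_linear.has_derivative[OF bounded_linear_matrix_vector_mult_left assms])
  then show ?thesis
    using matrix_vector_mult_diff_distrib[of "J x" 0 "DJ v *v u"]
    by (simp add: nijenhuis_def nijenhuis_field_def lie_bracket_def nijenhuis_jet_def)
qed

lemma holo_ext_vec_nijenhuis_jet:
  fixes J :: "real \<Rightarrow> real^'n^'n" and DJ :: "real \<Rightarrow> real^'n \<Rightarrow> real^'n^'n"
  assumes J: "holo_ext_mat S J" and DJ: "\<And>l. holo_ext_mat S (\<lambda>t. DJ t (axis l 1))"
    and lin: "\<And>t. complex_of_real t \<in> S \<Longrightarrow> linear (DJ t)"
  shows "holo_ext_vec S (\<lambda>t. nijenhuis_jet (J t) (DJ t) u v)"
proof -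
  have DJ_along: "holo_ext_mat S (\<lambda>t. DJ t (h t))" if h: "holo_ext_vec S h" for h
  proof (rule holo_ext_mat_cong)
    show "holo_ext_mat S (\<lambda>t. \<Sum>l\<in>UNIV. h t $ l *\<^sub>R DJ t (axis l 1))"
      using h unfolding holo_ext_vec_def by (intro holo_ext_mat_sum holo_ext_mat_scaleR DJ) auto
  qed (simp add: linear_axis_expansion[OF lin, symmetric])
  show ?thesis
    unfolding nijenhuis_jet_def
    by (intro holo_ext_vec_diff holo_ext_vec_add holo_ext_vec_mult DJ_along J holo_ext_vec_const)
qed

lemma holo_ext_vec_nijenhuis_deformed:
  fixes J0 :: "real^'n \<Rightarrow> real^'n^'n" and L :: "real \<Rightarrow> real^'n \<Rightarrow> real^'n^'n"
  assumes U: "open U" "x \<in> U" and J0: "J0 differentiable (at x)"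
    and L: "\<And>t. complex_of_real t \<in> S \<Longrightarrow> L t differentiable (at x)"
    and inv: "\<And>t y. complex_of_real t \<in> S \<Longrightarrow> y \<in> U \<Longrightarrow> invertible (mat 1 + L t y)"
    and L_ext: "holo_ext_mat S (\<lambda>t. L t x)"
    and DL_ext: "\<And>l. holo_ext_mat S (\<lambda>t. frechet_derivative (L t) (at x) (axis l 1))"
    and inv_ext: "holo_ext_mat S (\<lambda>t. matrix_inv (mat 1 + L t x))"
  shows "holo_ext_vec S (\<lambda>t. nijenhuis (deformed J0 (L t)) x u v)"
proof -
  define DJ where "DJ t h = (mat 1 + L t x) ** J0 x ** - (matrix_inv (mat 1 + L t x)
                   ** frechet_derivative (L t) (at x) h ** matrix_inv (mat 1 + L t x))
                 + ((mat 1 + L t x) ** frechet_derivative J0 (at x) h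
                   + frechet_derivative (L t) (at x) h ** J0 x) ** matrix_inv (mat 1 + L t x)"
    for t h
  have D: "(deformed J0 (L t) has_derivative DJ t) (at x)" if "complex_of_real t \<in> S" for t
    unfolding DJ_def using L[OF that] J0 inv[OF that] U
    by (intro has_derivative_deformed) (auto simp: frechet_derivative_works[symmetric])
  have "holo_ext_vec S (\<lambda>t. nijenhuis_jet (deformed J0 (L t) x) (DJ t) u v)"
  proof (rule holo_ext_vec_nijenhuis_jet)
    show "holo_ext_mat S (\<lambda>t. deformed J0 (L t) x)"
      unfolding deformed_def by (intro holo_ext_mat_mult holo_ext_mat_add holo_ext_mat_const L_ext inv_ext)
    show "holo_ext_mat S (\<lambda>t. DJ t (axis l 1))" for l
      unfolding DJ_def
      by (intro holo_ext_mat_mult holo_ext_mat_add holo_ext_mat_uminus holo_ext_mat_const L_ext inv_ext DL_ext)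
    show "linear (DJ t)" if "complex_of_real t \<in> S" for t
      using D[OF that] has_derivative_linear by blast
  qed
  then show ?thesis
    by (rule holo_ext_vec_cong) (simp add: nijenhuis_eq_jet[OF D])
qed

lemma nijenhuis_rank_eq_dim_basis_values:
  "nijenhuis_rank J x =
     vec.dim (range (\<lambda>(i, j). \<chi> k. complex_of_real (nijenhuis J x (axis i 1) (axis j 1) $ k)))"
proof -
  define X where "X = (\<lambda>(i, j). \<chi> k. complex_of_real (nijenhuis J x (axis i 1) (axis j 1) $ k))"
  define R where "R = range (\<lambda>(u, v). nijenhuis_C J x u v)"
  have C: "nijenhuis_C J x u v = (\<Sum>i\<in>UNIV. \<Sum>j\<in>UNIV. (u $ i * v $ j) *s X (i, j))" for u v
    unfolding nijenhuis_C_def X_def by simp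
  have "R \<subseteq> vec.span (range X)"
    unfolding R_def C by (auto intro!: vec.span_sum vec.span_scale vec.span_base[OF rangeI])
  then have "vec.dim R \<le> vec.dim (range X)"
    using vec.dim_subset vec.dim_span by metis
  moreover have "nijenhuis_C J x (axis i 1) (axis j 1) = X (i, j)" for i j
  proof -
    have "(axis i 1 $ i' * axis j 1 $ j') *s X (i', j') = (if j' = j then if i' = i then X (i', j') else 0 else 0)"
      for i' j'
      by (simp add: axis_def)
    then show ?thesis
      unfolding C by simp
  qed
  then have "range X \<subseteq> R"
    unfolding R_def by (auto simp: image_iff) (metis case_prod_conv)
  then have "vec.dim (range X) \<le> vec.dim R"
    by (rule vec.dim_subset)
  ultimately show ?thesis
    unfolding nijenhuis_rank_def R_def[symmetric] X_def by simp
qed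

lemma nijenhuis_deformed_by_zero:
  assumes U: "open U" "x \<in> U" and J: "J differentiable (at x)" and L: "\<And>y. y \<in> U \<Longrightarrow> L y = 0"
  shows "nijenhuis (deformed J L) x = nijenhuis J x"
proof -
  have eq: "deformed J L y = J y" if "y \<in> U" for y
    unfolding deformed_def by (simp add: L[OF that] matrix_inv_mat_1)
  have "(J has_derivative frechet_derivative J (at x)) (at x)"
    using J frechet_derivative_works by blast
  moreover have "(deformed J L has_derivative frechet_derivative J (at x)) (at x)"
    using calculation by (rule has_derivative_transform_within_open[OF _ U]) (simp add: eq)
  ultimately show ?thesis
    by (simp add: fun_eq_iff nijenhuis_eq_jet eq[OF U(2)])
qed

lemma nijenhuis_rank_maximal_cofinite:
  assumes N: "\<And>u v. holo_ext_vec S (\<lambda>t. nijenhuis (J t) x u v)"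
    and S: "open S" "connected S" "complex_of_real ` {a..b} \<subseteq> S"
  shows "finite {t \<in> {a..b}. \<exists>s\<in>{a..b}. nijenhuis_rank (J t) x < nijenhuis_rank (J s) x}"
proof -
  define w where
    "w t = (\<lambda>(i, j). \<chi> k. complex_of_real (nijenhuis (J t) x (axis i 1) (axis j 1) $ k))" for t
  have "holo_ext S (\<lambda>t. w t p $ k)" for p k
    using N unfolding holo_ext_vec_def w_def by (simp add: case_prod_beta)
  from holo_ext_rank_maximal_cofinite[OF this S] show ?thesis
    unfolding nijenhuis_rank_eq_dim_basis_values w_def .
qed

lemma holo_ext_vec_nijenhuis_power_series_deformation:
  fixes J0 :: "real^'n \<Rightarrow> real^'n^'n" and Lc :: "nat \<Rightarrow> real^'n \<Rightarrow> real^'n^'n"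
    and Lt :: "real \<Rightarrow> real^'n \<Rightarrow> real^'n^'n"
  assumes U: "open U" "x \<in> U" and J0: "J0 differentiable (at x)" and eps: "\<epsilon> > 0"
    and series: "\<And>t. \<bar>t\<bar> < \<epsilon> \<Longrightarrow> (\<lambda>k. t ^ k *\<^sub>R Lc k x) sums Lt t x"
    and series_deriv: "\<And>t l. \<bar>t\<bar> < \<epsilon> \<Longrightarrow>
          (\<lambda>k. t ^ k *\<^sub>R frechet_derivative (Lc k) (at x) (axis l 1))
            sums frechet_derivative (Lt t) (at x) (axis l 1)"
    and Lt: "\<And>t. \<bar>t\<bar> < \<epsilon> \<Longrightarrow> Lt t differentiable (at x)"
    and inv: "\<And>t y. \<bar>t\<bar> < \<epsilon> \<Longrightarrow> y \<in> U \<Longrightarrow> invertible (mat 1 + Lt t y)"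
  obtains S where "open S" "connected S" "complex_of_real ` {-\<epsilon><..<\<epsilon>} \<subseteq> S"
    and "\<And>u v. holo_ext_vec S (\<lambda>t. nijenhuis (deformed J0 (Lt t)) x u v)"
proof -
  have L_ext: "holo_ext_mat T (\<lambda>t. Lt t x)" if "T \<subseteq> ball 0 \<epsilon>" for T
    using that series by (intro holo_ext_mat_power_series[where c = "\<lambda>k. Lc k x"])
  then have "holo_ext_mat (ball 0 \<epsilon>) (\<lambda>t. mat 1 + Lt t x)"
    by (intro holo_ext_mat_add holo_ext_mat_const) simp
  then obtain S where S: "open S" "connected S" "S \<subseteq> ball 0 \<epsilon>" "complex_of_real ` {-\<epsilon><..<\<epsilon>} \<subseteq> S"
    and inv_ext: "holo_ext_mat S (\<lambda>t. matrix_inv (mat 1 + Lt t x))"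
    by (rule holo_ext_mat_matrix_inv[where I = "{-\<epsilon><..<\<epsilon>}" and s = 0])
      (use eps inv U in \<open>auto simp: is_interval_connected is_interval_def\<close>)
  have real_S: "\<bar>t\<bar> < \<epsilon>" if "complex_of_real t \<in> S" for t
    using that S(3) by auto
  have "holo_ext_vec S (\<lambda>t. nijenhuis (deformed J0 (Lt t)) x u v)" for u v
  proof (rule holo_ext_vec_nijenhuis_deformed[where L = Lt, OF U J0 _ _ _ _ inv_ext])
    show "holo_ext_mat S (\<lambda>t. Lt t x)"
      using S(3) by (rule L_ext)
    show "holo_ext_mat S (\<lambda>t. frechet_derivative (Lt t) (at x) (axis l 1))" for l
      using S(3) series_deriv
      by (intro holo_ext_mat_power_series[where c = "\<lambda>k. frechet_derivative (Lc k) (at x) (axis l 1)"])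
  qed (use real_S inv Lt in blast)+
  with S that show ?thesis by blast
qed

theorem lemma3p1:
  fixes U :: "(real^'n) set" and J0 :: "real^'n \<Rightarrow> real^'n^'n"
    and Lc :: "nat \<Rightarrow> real^'n \<Rightarrow> real^'n^'n"
    and Lt :: "real \<Rightarrow> real^'n \<Rightarrow> real^'n^'n"
    and \<epsilon> :: real and m :: nat
  assumes dim: "CARD('n) = 2 * m"
    and acs: "almost_complex_structure U J0"
    and eps: "\<epsilon> > 0"
    and coeff_smooth: "\<And>k. smooth_mat_field U (Lc k)"
    and coeff0: "\<And>x. x \<in> U \<Longrightarrow> Lc 0 x = 0"
    and series: "\<And>t x. \<bar>t\<bar> < \<epsilon> \<Longrightarrow> x \<in> U \<Longrightarrow> (\<lambda>k. (t ^ k) *\<^sub>R Lc k x) sums Lt t x"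
    and series_deriv: "\<And>t x i. \<bar>t\<bar> < \<epsilon> \<Longrightarrow> x \<in> U \<Longrightarrow>
          (\<lambda>k. (t ^ k) *\<^sub>R frechet_derivative (Lc k) (at x) (axis i 1))
            sums frechet_derivative (Lt t) (at x) (axis i 1)"
    and Lt_smooth: "\<And>t. \<bar>t\<bar> < \<epsilon> \<Longrightarrow> smooth_mat_field U (Lt t)"
    and anticomm: "\<And>t x. \<bar>t\<bar> < \<epsilon> \<Longrightarrow> x \<in> U \<Longrightarrow> Lt t x ** J0 x + J0 x ** Lt t x = 0"
    and inv: "\<And>t x. \<bar>t\<bar> < \<epsilon> \<Longrightarrow> x \<in> U \<Longrightarrow> invertible (mat 1 + Lt t x)"
  shows "\<forall>a\<in>{0<..<\<epsilon>}. \<forall>x\<in>U.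
           finite {t \<in> {-a..a}. nijenhuis_rank (deformed J0 (Lt t)) x
                     < max (nijenhuis_rank J0 x) (nijenhuis_rank (deformed J0 (Lt a)) x)}"
proof (intro ballI)
  fix a x assume a: "a \<in> {0<..<\<epsilon>}" and x: "x \<in> U"
  have U: "open U" and J0: "J0 differentiable (at x)"
    using acs x smooth_mat_field_differentiable unfolding almost_complex_structure_def by blast+
  obtain S where S: "open S" "connected S" "complex_of_real ` {-\<epsilon><..<\<epsilon>} \<subseteq> S"
    and N: "\<And>u v. holo_ext_vec S (\<lambda>t. nijenhuis (deformed J0 (Lt t)) x u v)"
    by (rule holo_ext_vec_nijenhuis_power_series_deformation[OF U x J0 eps
          series[OF _ x] series_deriv[OF _ x] smooth_mat_field_differentiable[OF Lt_smooth x] inv])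
      (assumption | rule that)+
  have "complex_of_real ` {-a..a} \<subseteq> S"
    using a S(3) by force
  note generic = nijenhuis_rank_maximal_cofinite[OF N S(1,2) this]
  have "Lt 0 y = 0" if "y \<in> U" for y
    using power_series_sums_at_zero[OF series[of 0 y]] eps that coeff0 by simp
  then have "nijenhuis (deformed J0 (Lt 0)) x = nijenhuis J0 x"
    using nijenhuis_deformed_by_zero[OF U x J0] by simp
  then have "nijenhuis_rank J0 x = nijenhuis_rank (deformed J0 (Lt 0)) x"
    unfolding nijenhuis_rank_def nijenhuis_C_def by simp
  then show "finite {t \<in> {-a..a}. nijenhuis_rank (deformed J0 (Lt t)) x
                     < max (nijenhuis_rank J0 x) (nijenhuis_rank (deformed J0 (Lt a)) x)}"
    by (intro finite_subset[OF _ generic]) (use a in \<open>auto simp: less_max_iff_disj\<close>)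
qed

end
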